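(* Let $c_1>0>c_2$, $L=c_1-c_2$, $t_0>0$, and set $$q_1(0)=\ln L-c_1t_0-\ln\big(c_1-c_2e^{-Lt_0}\big),\qquad q_2(0)=-\ln L-c_2t_0+\ln\big(c_1e^{-Lt_0}-c_2\big).$$ Define for $\xi\in[q_1(0),q_2(0)]$ $$h_*(\xi)=\frac{4c_1^2c_2^2(1-e^{-Lt_0})^2e^{\xi}}{\Big(Le^{-c_1t_0}+c_2-c_1e^{-Lt_0}+\big(-c_1+c_2e^{-Lt_0}+Le^{c_2t_0}\big)e^{\xi}\Big)^2}.$$ Then (whenever the denominator does not vanish on $[q_1(0),q_2(0)]$) $$\int_{q_1(0)}^{q_2(0)}h_*(\xi)\,d\xi=-4c_1c_2 .$$ Moreover $h_*(\xi)=\lim_{t\uparrow t_0}u_x\big(t,y_m(t,\xi)\big)^2\,\partial_\xi y_m(t,\xi)$ for $\xi\in(q_1(0),q_2(0))$, where $u$ and $y_m$ are as in the context.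
   Context: For $t\neq t_0$ let $p_1(t)=\frac{c_1-c_2e^{L(t-t_0)}}{1-e^{L(t-t_0)}}$, $p_2(t)=\frac{c_2-c_1e^{L(t-t_0)}}{1-e^{L(t-t_0)}}$, $q_1(t)=\ln L+c_1(t-t_0)-\ln(c_1-c_2e^{L(t-t_0)})$, $q_2(t)=-\ln L+c_2(t-t_0)+\ln(c_1e^{L(t-t_0)}-c_2)$, and $u(t,x)=p_1(t)e^{-|x-q_1(t)|}+p_2(t)e^{-|x-q_2(t)|}$ for $t<t_0$. With $C(\xi)=c_2-c_1e^{-Lt_0}+Le^{\xi+c_2t_0}$ and $D(\xi)=L^2e^{-c_1t_0}-Lc_1e^{\xi}+Lc_2e^{\xi-Lt_0}$, let $$y_m(t,\xi)=\ln\!\left(\frac{e^{c_2(t-t_0)}}{L}\cdot\frac{(c_1e^{L(t-t_0)}-c_2)D(\xi)+L^2e^{c_1(t-t_0)}C(\xi)}{D(\xi)+(c_1e^{c_2(t-t_0)}-c_2e^{c_1(t-t_0)})C(\xi)}\right),$$ the characteristic (solution of $\partial_t y=u(t,y)$, $y(0,\xi)=\xi$) starting between the two peaks. *)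

theory Defs
  imports "HOL-Analysis.Analysis"
begin

definition pk_p1 :: "real \<Rightarrow> real \<Rightarrow> real \<Rightarrow> real \<Rightarrow> real" where
  "pk_p1 c1 c2 t0 t = (c1 - c2 * exp ((c1 - c2) * (t - t0))) / (1 - exp ((c1 - c2) * (t - t0)))"

definition pk_p2 :: "real \<Rightarrow> real \<Rightarrow> real \<Rightarrow> real \<Rightarrow> real" where
  "pk_p2 c1 c2 t0 t = (c2 - c1 * exp ((c1 - c2) * (t - t0))) / (1 - exp ((c1 - c2) * (t - t0)))"

definition pk_q1 :: "real \<Rightarrow> real \<Rightarrow> real \<Rightarrow> real \<Rightarrow> real" where
  "pk_q1 c1 c2 t0 t = ln (c1 - c2) + c1 * (t - t0) - ln (c1 - c2 * exp ((c1 - c2) * (t - t0)))"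

definition pk_q2 :: "real \<Rightarrow> real \<Rightarrow> real \<Rightarrow> real \<Rightarrow> real" where
  "pk_q2 c1 c2 t0 t = - ln (c1 - c2) + c2 * (t - t0) + ln (c1 * exp ((c1 - c2) * (t - t0)) - c2)"

definition pk_u :: "real \<Rightarrow> real \<Rightarrow> real \<Rightarrow> real \<Rightarrow> real \<Rightarrow> real" where
  "pk_u c1 c2 t0 t x =
     pk_p1 c1 c2 t0 t * exp (- \<bar>x - pk_q1 c1 c2 t0 t\<bar>) + pk_p2 c1 c2 t0 t * exp (- \<bar>x - pk_q2 c1 c2 t0 t\<bar>)"

definition pk_C :: "real \<Rightarrow> real \<Rightarrow> real \<Rightarrow> real \<Rightarrow> real" where
  "pk_C c1 c2 t0 \<xi> = c2 - c1 * exp (- (c1 - c2) * t0) + (c1 - c2) * exp (\<xi> + c2 * t0)"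

definition pk_D :: "real \<Rightarrow> real \<Rightarrow> real \<Rightarrow> real \<Rightarrow> real" where
  "pk_D c1 c2 t0 \<xi> = (c1 - c2)^2 * exp (- c1 * t0) - (c1 - c2) * c1 * exp \<xi>
                     + (c1 - c2) * c2 * exp (\<xi> - (c1 - c2) * t0)"

definition pk_ym :: "real \<Rightarrow> real \<Rightarrow> real \<Rightarrow> real \<Rightarrow> real \<Rightarrow> real" where
  "pk_ym c1 c2 t0 t \<xi> =
     ln (exp (c2 * (t - t0)) / (c1 - c2) *
        (((c1 * exp ((c1 - c2) * (t - t0)) - c2) * pk_D c1 c2 t0 \<xi>
           + (c1 - c2)^2 * exp (c1 * (t - t0)) * pk_C c1 c2 t0 \<xi>)
         / (pk_D c1 c2 t0 \<xi> + (c1 * exp (c2 * (t - t0)) - c2 * exp (c1 * (t - t0))) * pk_C c1 c2 t0 \<xi>)))"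

definition pk_hstar_den :: "real \<Rightarrow> real \<Rightarrow> real \<Rightarrow> real \<Rightarrow> real" where
  "pk_hstar_den c1 c2 t0 \<xi> =
     (c1 - c2) * exp (- c1 * t0) + c2 - c1 * exp (- (c1 - c2) * t0)
     + (- c1 + c2 * exp (- (c1 - c2) * t0) + (c1 - c2) * exp (c2 * t0)) * exp \<xi>"

definition pk_hstar :: "real \<Rightarrow> real \<Rightarrow> real \<Rightarrow> real \<Rightarrow> real" where
  "pk_hstar c1 c2 t0 \<xi> =
     4 * c1^2 * c2^2 * (1 - exp (- (c1 - c2) * t0))^2 * exp \<xi> / (pk_hstar_den c1 c2 t0 \<xi>)^2"

end

theory Submission
  imports Defs
begin

text \<open>
  With \<open>E = e^{L(t - t\<^sub>0)}\<close> and \<open>w = e^{c\<^sub>2(t - t\<^sub>0)}\<close>, the characteristic is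
  \<open>y\<^sub>m = ln (w N / (L M))\<close>, where \<open>M\<close> and \<open>N\<close> are linear combinations of \<open>C(\<xi>)\<close> and
  \<open>D(\<xi>)\<close> with coefficients depending on \<open>t\<close>. As functions of \<open>e\<^sup>\<xi>\<close>, \<open>D\<close> and \<open>C\<close> are affine and
  vanish exactly at \<open>e^{q\<^sub>1(0)}\<close> and \<open>e^{q\<^sub>2(0)}\<close>; so for \<open>\<xi>\<close> strictly between the initial peaks
  both are negative, \<open>y\<^sub>m\<close> stays strictly between the peaks for \<open>t < t\<^sub>0\<close>, and there
  \<open>u\<^sub>x = p\<^sub>2 e^{y - q\<^sub>2} - p\<^sub>1 e^{q\<^sub>1 - y}\<close>. In the product \<open>u\<^sub>x\<^sup>2 \<partial>\<^sub>\<xi>y\<^sub>m\<close> the factor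
  \<open>(1 - E)\<^sup>-\<^sup>2\<close> of \<open>u\<^sub>x\<^sup>2\<close> cancels against \<open>(1 - E)\<^sup>2\<close> in \<open>\<partial>\<^sub>\<xi>y\<^sub>m\<close>, leaving an expression
  continuous at \<open>t = t\<^sub>0\<close>, where \<open>E = w = 1\<close> and \<open>M = D + L C = L h\<^sub>d\<^sub>e\<^sub>n\<close>; this gives the limit
  \<open>h\<^sub>*\<close>. The integral identity is elementary, since \<open>h\<^sub>* = K e\<^sup>\<xi> / (A + B e\<^sup>\<xi>)\<^sup>2\<close>, and the values
  of the denominator at the endpoints are again read off from the zeros of \<open>C\<close> and \<open>D\<close>.
\<close>

lemma has_integral_exp_div_affine_exp_sq:
  fixes A B K a b :: real
  assumes "a \<le> b" and nz: "\<And>x. x \<in> {a..b} \<Longrightarrow> A + B * exp x \<noteq> 0"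
  shows "((\<lambda>x. K * exp x / (A + B * exp x)^2) has_integral
           K * (exp b - exp a) / ((A + B * exp a) * (A + B * exp b))) {a..b}"
proof -
  have na: "A + B * exp a \<noteq> 0" using nz assms(1) by simp
  \<comment> \<open>normalised to vanish at \<open>a\<close>, so that no division by \<open>B\<close> is needed\<close>
  define G where "G x = K * (exp x - exp a) / ((A + B * exp a) * (A + B * exp x))" for x
  have "(G has_vector_derivative K * exp x / (A + B * exp x)^2) (at x within {a..b})"
    if "x \<in> {a..b}" for x
  proof -
    have nx: "A + B * exp x \<noteq> 0" using nz that .
    have "(G has_real_derivative K * exp x / (A + B * exp x)^2) (at x)"
      unfolding G_def
      apply (rule derivative_eq_intros refl | simp add: nx na)+
      using nx na apply (simp add: divide_simps)
      apply (simp add: algebra_simps power2_eq_square)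
      done
    then show ?thesis
      by (simp add: has_real_derivative_iff_has_vector_derivative has_vector_derivative_at_within)
  qed
  from fundamental_theorem_of_calculus[OF assms(1) this]
  show ?thesis by (simp add: G_def)
qed

lemma peakon_pair_has_real_derivative:
  fixes P1 P2 Q1 Q2 x :: real
  assumes "Q1 < x" and "x < Q2"
  shows "((\<lambda>y. P1 * exp (- \<bar>y - Q1\<bar>) + P2 * exp (- \<bar>y - Q2\<bar>)) has_real_derivative
           P2 * exp (x - Q2) - P1 * exp (Q1 - x)) (at x)"
proof -
  have "((\<lambda>y. P1 * exp (- (y - Q1)) + P2 * exp (- (Q2 - y))) has_real_derivative
           P2 * exp (x - Q2) - P1 * exp (Q1 - x)) (at x)"
    by (rule derivative_eq_intros refl)+ simp
  then show ?thesis
  proof (rule has_field_derivative_transform_within_open)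
    show "open {Q1<..<Q2}" and "x \<in> {Q1<..<Q2}"
      using assms by auto
  qed auto
qed

lemma DERIV_ln_ratio_lincomb:
  fixes C D :: "real \<Rightarrow> real"
  assumes C: "(C has_real_derivative C') (at x)" and D: "(D has_real_derivative D') (at x)"
    and "k > 0" and pos: "(a * D x + b * C x) / (D x + c * C x) > 0"
  shows "((\<lambda>y. ln (k * ((a * D y + b * C y) / (D y + c * C y)))) has_real_derivative
           (a * c - b) * (D' * C x - D x * C') / ((D x + c * C x) * (a * D x + b * C x))) (at x)"
proof -
  define M N where "M = D x + c * C x" and "N = a * D x + b * C x"
  have "M \<noteq> 0" and "N \<noteq> 0"
    using pos by (auto simp: M_def N_def)
  have dM: "((\<lambda>y. D y + c * C y) has_real_derivative D' + c * C') (at x)"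
    by (intro DERIV_add DERIV_cmult C D)
  have dN: "((\<lambda>y. a * D y + b * C y) has_real_derivative a * D' + b * C') (at x)"
    by (intro DERIV_add DERIV_cmult C D)
  have F: "((\<lambda>y. k * ((a * D y + b * C y) / (D y + c * C y))) has_real_derivative
          k * (((a * D' + b * C') * M - N * (D' + c * C')) / (M * M))) (at x)"
    using DERIV_cmult[OF DERIV_divide[OF dN dM]] \<open>M \<noteq> 0\<close> by (simp add: M_def N_def)
  have pos': "0 < k * (N / M)"
    using \<open>k > 0\<close> pos unfolding M_def N_def by (rule mult_pos_pos)
  have "((\<lambda>y. ln (k * ((a * D y + b * C y) / (D y + c * C y)))) has_real_derivative
          1 / (k * (N / M)) * (k * (((a * D' + b * C') * M - N * (D' + c * C')) / (M * M)))) (at x)"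
    using DERIV_chain2[OF DERIV_ln_divide[OF pos'[unfolded M_def N_def]] F[unfolded M_def N_def]]
    unfolding M_def N_def .
  moreover have "1 / (k * (N / M)) * (k * (((a * D' + b * C') * M - N * (D' + c * C')) / (M * M)))
                 = (a * c - b) * (D' * C x - D x * C') / (M * N)"
    using \<open>k > 0\<close> \<open>M \<noteq> 0\<close> \<open>N \<noteq> 0\<close> unfolding M_def N_def
    by (simp add: divide_simps) (simp add: algebra_simps)
  ultimately show ?thesis
    by (simp add: M_def N_def)
qed

lemma weight_product:
  fixes c1 c2 e :: real
  shows "(c1 * e - c2) * (c1 - c2 * e) - (c1 - c2)^2 * e = - c1 * c2 * (1 - e)^2"
  by (simp add: algebra_simps power2_eq_square)

locale two_peakon =
  fixes c1 c2 t0 :: real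
  assumes c1_pos: "c1 > 0" and c2_neg: "c2 < 0" and t0_pos: "t0 > 0"
begin

abbreviation L :: real where "L \<equiv> c1 - c2"

definition E :: "real \<Rightarrow> real" where "E t = exp ((c1 - c2) * (t - t0))"
definition w :: "real \<Rightarrow> real" where "w t = exp (c2 * (t - t0))"

lemma L_pos: "L > 0"
  using c1_pos c2_neg by simp

lemma E_pos: "E t > 0" and w_pos: "w t > 0"
  by (simp_all add: E_def w_def)

lemma E_less_1: "t < t0 \<Longrightarrow> E t < 1"
  using L_pos by (simp add: E_def mult_pos_neg)

lemma collision_coeff_pos: "t < t0 \<Longrightarrow> - c1 * c2 * (1 - E t)^2 * w t > 0"
  using c1_pos c2_neg E_less_1[of t] w_pos[of t]
  by (intro mult_pos_pos mult_neg_neg) auto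

lemma exp_c1: "exp (c1 * (t - t0)) = E t * w t"
  by (simp add: E_def w_def mult_exp_exp algebra_simps)

lemma weight1_pos: "c1 - c2 * E t > 0"
  using c1_pos mult_neg_pos[OF c2_neg E_pos[of t]] by simp

lemma weight2_pos: "c1 * E t - c2 > 0"
  using c2_neg mult_pos_pos[OF c1_pos E_pos[of t]] by simp

lemma exp_pk_q1: "exp (pk_q1 c1 c2 t0 t) = L * E t * w t / (c1 - c2 * E t)"
  using L_pos weight1_pos[of t]
  by (simp add: pk_q1_def exp_diff exp_add exp_c1 flip: E_def)

lemma exp_pk_q2: "exp (pk_q2 c1 c2 t0 t) = w t * (c1 * E t - c2) / L"
proof -
  have "pk_q2 c1 c2 t0 t = - ln L + c2 * (t - t0) + ln (c1 * E t - c2)"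
    unfolding pk_q2_def E_def ..
  then have "exp (pk_q2 c1 c2 t0 t) = exp (- ln L) * w t * exp (ln (c1 * E t - c2))"
    by (simp only: exp_add w_def)
  then show ?thesis
    using L_pos weight2_pos[of t] by (simp add: exp_minus field_simps)
qed

definition z1 :: real where "z1 = exp (pk_q1 c1 c2 t0 0)"
definition z2 :: real where "z2 = exp (pk_q2 c1 c2 t0 0)"

lemma z1_pos: "z1 > 0" and z2_pos: "z2 > 0"
  by (simp_all add: z1_def z2_def)

lemma pk_q1_zero: "pk_q1 c1 c2 t0 0 = ln z1" and pk_q2_zero: "pk_q2 c1 c2 t0 0 = ln z2"
  by (simp_all add: z1_def z2_def)

lemma exp_neg_L_t0: "exp (- (c1 - c2) * t0) = E 0"
  by (simp add: E_def algebra_simps)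

lemma exp_L_t0: "exp ((c1 - c2) * t0) = 1 / E 0"
  by (simp add: E_def exp_minus divide_inverse algebra_simps flip: exp_minus)

lemma exp_neg_c1_t0: "exp (- c1 * t0) = E 0 * w 0"
  using exp_c1[of 0] by simp

lemma exp_c2_t0: "exp (c2 * t0) = 1 / w 0"
  by (simp add: w_def exp_minus divide_inverse)

lemma z1_eq: "z1 = L * E 0 * w 0 / (c1 - c2 * E 0)" and z2_eq: "z2 = w 0 * (c1 * E 0 - c2) / L"
  by (simp_all add: z1_def z2_def exp_pk_q1 exp_pk_q2)

lemma peak_gap_at_zero: "L * (c1 - c2 * E 0) * (z2 - z1) = - c1 * c2 * (1 - E 0)^2 * w 0"
proof -
  have "z2 - z1 = w 0 * ((c1 * E 0 - c2) * (c1 - c2 * E 0) - L^2 * E 0) / (L * (c1 - c2 * E 0))"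
    using L_pos weight1_pos[of 0] by (simp add: z1_eq z2_eq field_simps power2_eq_square)
  then show ?thesis
    using L_pos weight1_pos[of 0] by (simp add: weight_product)
qed

lemma z1_less_z2: "z1 < z2"
proof -
  have "L * (c1 - c2 * E 0) * (z2 - z1) > 0"
    using collision_coeff_pos t0_pos by (simp add: peak_gap_at_zero)
  moreover have "L * (c1 - c2 * E 0) > 0"
    using L_pos weight1_pos[of 0] by simp
  ultimately show ?thesis
    using zero_less_mult_pos by fastforce
qed

lemma pk_C_eq: "pk_C c1 c2 t0 x = L * (exp x - z2) / w 0"
  unfolding pk_C_def exp_add exp_neg_L_t0 exp_c2_t0 z2_eq
  using L_pos w_pos[of 0] by (simp add: field_simps)

lemma pk_D_eq: "pk_D c1 c2 t0 x = L * (c2 * E 0 - c1) * (exp x - z1)"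
  unfolding pk_D_def exp_diff exp_neg_c1_t0 exp_L_t0 z1_eq
  using L_pos weight1_pos[of 0] E_pos[of 0] by (simp add: field_simps power2_eq_square)

lemma pk_hstar_den_eq: "pk_hstar_den c1 c2 t0 x = (pk_D c1 c2 t0 x + L * pk_C c1 c2 t0 x) / L"
  unfolding pk_hstar_den_def pk_C_def pk_D_def exp_add exp_diff
    exp_neg_L_t0 exp_L_t0 exp_neg_c1_t0 exp_c2_t0
  using L_pos E_pos[of 0] w_pos[of 0] by (simp add: field_simps power2_eq_square)

lemma pk_D_plus_L_pk_C: "pk_D c1 c2 t0 x + L * pk_C c1 c2 t0 x = L * pk_hstar_den c1 c2 t0 x"
  using L_pos by (simp add: pk_hstar_den_eq)

lemma pk_hstar_eq:
  "pk_hstar c1 c2 t0 x = 4 * c1^2 * c2^2 * (1 - E 0)^2 * exp x / (pk_hstar_den c1 c2 t0 x)^2"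
  unfolding pk_hstar_def exp_neg_L_t0 ..

lemma pk_hstar_den_affine:
  "pk_hstar_den c1 c2 t0 x = (L * E 0 * w 0 + c2 - c1 * E 0) + (c2 * E 0 - c1 + L / w 0) * exp x"
  unfolding pk_hstar_den_def exp_neg_L_t0 exp_neg_c1_t0 exp_c2_t0 by simp

lemma pk_hstar_den_at_z1: "pk_hstar_den c1 c2 t0 (ln z1) = L * (z1 - z2) / w 0"
  using L_pos z1_pos by (simp add: pk_hstar_den_eq pk_C_eq pk_D_eq)

lemma pk_hstar_den_at_z2: "pk_hstar_den c1 c2 t0 (ln z2) = (c2 * E 0 - c1) * (z2 - z1)"
  using L_pos z2_pos by (simp add: pk_hstar_den_eq pk_C_eq pk_D_eq)

lemma pk_hstar_has_integral:
  assumes nz: "\<forall>\<xi>\<in>{pk_q1 c1 c2 t0 0 .. pk_q2 c1 c2 t0 0}. pk_hstar_den c1 c2 t0 \<xi> \<noteq> 0"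
  shows "(pk_hstar c1 c2 t0 has_integral (- 4 * c1 * c2)) {pk_q1 c1 c2 t0 0 .. pk_q2 c1 c2 t0 0}"
proof -
  define K where "K = 4 * c1^2 * c2^2 * (1 - E 0)^2"
  define A where "A = L * E 0 * w 0 + c2 - c1 * E 0"
  define B where "B = c2 * E 0 - c1 + L / w 0"
  have den: "pk_hstar_den c1 c2 t0 x = A + B * exp x" for x
    unfolding pk_hstar_den_affine A_def B_def ..
  have hstar: "pk_hstar c1 c2 t0 = (\<lambda>x. K * exp x / (A + B * exp x)^2)"
    by (rule ext) (simp only: pk_hstar_eq den K_def)
  have "ln z1 \<le> ln z2"
    using z1_less_z2 z1_pos by simp
  from has_integral_exp_div_affine_exp_sq[OF this, of A B K]
  have "(pk_hstar c1 c2 t0 has_integral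
          K * (z2 - z1) / (pk_hstar_den c1 c2 t0 (ln z1) * pk_hstar_den c1 c2 t0 (ln z2))) {ln z1..ln z2}"
    using nz z1_pos z2_pos by (simp add: hstar den pk_q1_zero pk_q2_zero)
  also have "pk_hstar_den c1 c2 t0 (ln z1) * pk_hstar_den c1 c2 t0 (ln z2)
             = L * (c1 - c2 * E 0) * (z2 - z1) * (z2 - z1) / w 0"
    using w_pos[of 0] unfolding pk_hstar_den_at_z1 pk_hstar_den_at_z2
    by (simp add: divide_simps) (simp add: algebra_simps)
  also have "K * (z2 - z1) / (L * (c1 - c2 * E 0) * (z2 - z1) * (z2 - z1) / w 0)
             = K * w 0 / (L * (c1 - c2 * E 0) * (z2 - z1))"
    using z1_less_z2 by simp
  also have "L * (c1 - c2 * E 0) * (z2 - z1) = - c1 * c2 * (1 - E 0)^2 * w 0"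
    by (rule peak_gap_at_zero)
  also have "K * w 0 / (- c1 * c2 * (1 - E 0)^2 * w 0) = - 4 * c1 * c2"
    using w_pos[of 0] E_less_1[OF t0_pos] c1_pos c2_neg by (simp add: K_def power2_eq_square)
  finally show ?thesis
    by (simp add: pk_q1_zero pk_q2_zero)
qed

definition M :: "real \<Rightarrow> real \<Rightarrow> real" where
  "M t x = pk_D c1 c2 t0 x + w t * (c1 - c2 * E t) * pk_C c1 c2 t0 x"

definition N :: "real \<Rightarrow> real \<Rightarrow> real" where
  "N t x = (c1 * E t - c2) * pk_D c1 c2 t0 x + L^2 * E t * w t * pk_C c1 c2 t0 x"

lemma pk_ym_eq:
  "pk_ym c1 c2 t0 t x = ln (w t / L * (((c1 * E t - c2) * pk_D c1 c2 t0 x + L^2 * E t * w t * pk_C c1 c2 t0 x)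
                                     / (pk_D c1 c2 t0 x + w t * (c1 - c2 * E t) * pk_C c1 c2 t0 x)))"
  unfolding pk_ym_def exp_c1 E_def[symmetric] w_def[symmetric] by (simp add: algebra_simps)

lemma pk_ym_eq_ln: "pk_ym c1 c2 t0 t x = ln (w t / L * (N t x / M t x))"
  unfolding pk_ym_eq M_def N_def ..

lemma pk_C_neg: "exp x < z2 \<Longrightarrow> pk_C c1 c2 t0 x < 0"
  using L_pos w_pos[of 0] by (simp add: pk_C_eq divide_neg_pos mult_pos_neg)

lemma pk_D_neg: "z1 < exp x \<Longrightarrow> pk_D c1 c2 t0 x < 0"
  using L_pos weight1_pos[of 0] by (simp add: pk_D_eq mult_pos_neg mult_neg_pos)

lemma M_neg: "z1 < exp x \<Longrightarrow> exp x < z2 \<Longrightarrow> M t x < 0"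
  using pk_C_neg pk_D_neg w_pos[of t] weight1_pos[of t] by (simp add: M_def add_neg_neg mult_pos_neg)

lemma N_neg: "z1 < exp x \<Longrightarrow> exp x < z2 \<Longrightarrow> N t x < 0"
  using pk_C_neg pk_D_neg w_pos[of t] E_pos[of t] weight2_pos[of t] L_pos
  by (simp add: N_def add_neg_neg mult_pos_neg)

lemma N_sub_M_eq_pk_D:
  "N t x * (c1 - c2 * E t) - L^2 * E t * M t x = - c1 * c2 * (1 - E t)^2 * pk_D c1 c2 t0 x"
proof -
  have "N t x * (c1 - c2 * E t) - L^2 * E t * M t x
        = ((c1 * E t - c2) * (c1 - c2 * E t) - L^2 * E t) * pk_D c1 c2 t0 x"
    by (simp add: M_def N_def algebra_simps)
  then show ?thesis
    by (simp add: weight_product)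
qed

lemma M_sub_N_eq_pk_C:
  "(c1 * E t - c2) * M t x - N t x = - c1 * c2 * (1 - E t)^2 * w t * pk_C c1 c2 t0 x"
proof -
  have "(c1 * E t - c2) * M t x - N t x
        = ((c1 * E t - c2) * (c1 - c2 * E t) - L^2 * E t) * w t * pk_C c1 c2 t0 x"
    by (simp add: M_def N_def algebra_simps)
  then show ?thesis
    by (simp add: weight_product)
qed

lemma pk_ym_between_peaks:
  assumes "t < t0" and "z1 < exp x" and "exp x < z2"
  shows "pk_q1 c1 c2 t0 t < pk_ym c1 c2 t0 t x" and "pk_ym c1 c2 t0 t x < pk_q2 c1 c2 t0 t"
proof -
  define Y where "Y = w t / L * (N t x / M t x)"
  have ym: "pk_ym c1 c2 t0 t x = ln Y"
    unfolding pk_ym_eq_ln Y_def ..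
  have M: "M t x < 0" and N: "N t x < 0"
    using assms M_neg N_neg by auto
  have Y_pos: "Y > 0"
    unfolding Y_def using L_pos w_pos[of t] M N by (intro mult_pos_pos divide_pos_pos divide_neg_neg)
  note coeff_pos = collision_coeff_pos[OF assms(1)]
  have "Y - exp (pk_q1 c1 c2 t0 t) = w t * (N t x * (c1 - c2 * E t) - L^2 * E t * M t x)
                                      / (L * M t x * (c1 - c2 * E t))"
    using L_pos M weight1_pos[of t]
    by (simp add: Y_def exp_pk_q1 field_simps power2_eq_square)
  also have "\<dots> = (- c1 * c2 * (1 - E t)^2 * w t) * (pk_D c1 c2 t0 x / M t x) / (L * (c1 - c2 * E t))"
    unfolding N_sub_M_eq_pk_D by (simp add: mult_ac)
  also have "\<dots> > 0"
    using L_pos weight1_pos[of t]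
    by (intro divide_pos_pos mult_pos_pos coeff_pos divide_neg_neg[OF pk_D_neg[OF assms(2)] M]) auto
  finally have "Y - exp (pk_q1 c1 c2 t0 t) > 0" .
  then show "pk_q1 c1 c2 t0 t < pk_ym c1 c2 t0 t x"
    unfolding ym using Y_pos by (metis diff_gt_0_iff_gt exp_gt_zero ln_exp ln_less_cancel_iff)
  have "exp (pk_q2 c1 c2 t0 t) - Y = w t * ((c1 * E t - c2) * M t x - N t x) / (L * M t x)"
    using L_pos M by (simp add: Y_def exp_pk_q2 divide_simps) (simp add: algebra_simps)
  also have "\<dots> = (- c1 * c2 * (1 - E t)^2 * w t) * w t * (pk_C c1 c2 t0 x / M t x) / L"
    unfolding M_sub_N_eq_pk_C by (simp add: mult_ac)
  also have "\<dots> > 0"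
    using L_pos
    by (intro divide_pos_pos mult_pos_pos coeff_pos w_pos divide_neg_neg[OF pk_C_neg[OF assms(3)] M])
  finally have "exp (pk_q2 c1 c2 t0 t) - Y > 0" .
  then show "pk_ym c1 c2 t0 t x < pk_q2 c1 c2 t0 t"
    unfolding ym using Y_pos by (metis diff_gt_0_iff_gt exp_gt_zero ln_exp ln_less_cancel_iff)
qed

lemma pk_C_has_real_derivative: "(pk_C c1 c2 t0 has_real_derivative L * exp x / w 0) (at x)"
proof -
  have "pk_C c1 c2 t0 = (\<lambda>x. L * (exp x - z2) / w 0)"
    by (rule ext) (rule pk_C_eq)
  then show ?thesis
    using w_pos[of 0] by (auto intro!: derivative_eq_intros)
qed

lemma pk_D_has_real_derivative: "(pk_D c1 c2 t0 has_real_derivative L * (c2 * E 0 - c1) * exp x) (at x)"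
proof -
  have "pk_D c1 c2 t0 = (\<lambda>x. L * (c2 * E 0 - c1) * (exp x - z1))"
    by (rule ext) (rule pk_D_eq)
  then show ?thesis
    by (auto intro!: derivative_eq_intros)
qed

lemma pk_D_pk_C_wronskian:
  "L * (c2 * E 0 - c1) * exp x * pk_C c1 c2 t0 x - pk_D c1 c2 t0 x * (L * exp x / w 0)
   = - L * c1 * c2 * (1 - E 0)^2 * exp x"
proof -
  have "L * (c2 * E 0 - c1) * exp x * pk_C c1 c2 t0 x - pk_D c1 c2 t0 x * (L * exp x / w 0)
        = L * exp x * (L * (c1 - c2 * E 0) * (z2 - z1)) / w 0"
    unfolding pk_C_eq pk_D_eq using w_pos[of 0] by (simp add: divide_simps) (simp add: algebra_simps)
  also have "\<dots> = - L * c1 * c2 * (1 - E 0)^2 * exp x"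
    unfolding peak_gap_at_zero using w_pos[of 0] by (simp add: divide_simps) (simp add: algebra_simps)
  finally show ?thesis .
qed

lemma pk_ym_has_real_derivative:
  assumes "z1 < exp x" and "exp x < z2"
  shows "(pk_ym c1 c2 t0 t has_real_derivative
           - c1 * c2 * (1 - E t)^2 * w t * (- L * c1 * c2 * (1 - E 0)^2 * exp x) / (M t x * N t x)) (at x)"
proof -
  have ym: "pk_ym c1 c2 t0 t
            = (\<lambda>y. ln (w t / L * (((c1 * E t - c2) * pk_D c1 c2 t0 y + L^2 * E t * w t * pk_C c1 c2 t0 y)
                                 / (pk_D c1 c2 t0 y + w t * (c1 - c2 * E t) * pk_C c1 c2 t0 y))))"
    by (rule ext) (rule pk_ym_eq)
  have "N t x / M t x > 0"
    using assms M_neg N_neg by (simp add: divide_neg_neg)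
  then have "(pk_ym c1 c2 t0 t has_real_derivative
          ((c1 * E t - c2) * (w t * (c1 - c2 * E t)) - L^2 * E t * w t)
          * (L * (c2 * E 0 - c1) * exp x * pk_C c1 c2 t0 x - pk_D c1 c2 t0 x * (L * exp x / w 0))
          / (M t x * N t x)) (at x)"
    unfolding ym M_def N_def using L_pos w_pos[of t]
    by (intro DERIV_ln_ratio_lincomb pk_C_has_real_derivative pk_D_has_real_derivative) simp_all
  moreover have "(c1 * E t - c2) * (w t * (c1 - c2 * E t)) - L^2 * E t * w t = - c1 * c2 * (1 - E t)^2 * w t"
    by (simp add: algebra_simps power2_eq_square)
  ultimately show ?thesis
    by (simp only: pk_D_pk_C_wronskian)
qed

lemma deriv_pk_u_at_pk_ym:
  assumes "t < t0" and "z1 < exp x" and "exp x < z2"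
  shows "deriv (pk_u c1 c2 t0 t) (pk_ym c1 c2 t0 t x)
         = - (L^2 * E t * (M t x)^2 + (N t x)^2) / ((1 - E t) * M t x * N t x)"
proof -
  define P1 P2 Q1 Q2 where "P1 = pk_p1 c1 c2 t0 t" and "P2 = pk_p2 c1 c2 t0 t"
    and "Q1 = pk_q1 c1 c2 t0 t" and "Q2 = pk_q2 c1 c2 t0 t"
  define Y where "Y = w t / L * (N t x / M t x)"
  have M: "M t x < 0" and N: "N t x < 0"
    using assms M_neg N_neg by auto
  have Y_pos: "Y > 0"
    unfolding Y_def using L_pos w_pos[of t] M N by (intro mult_pos_pos divide_pos_pos divide_neg_neg)
  have ym: "pk_ym c1 c2 t0 t x = ln Y"
    unfolding pk_ym_eq_ln Y_def ..
  have u: "pk_u c1 c2 t0 t = (\<lambda>y. P1 * exp (- \<bar>y - Q1\<bar>) + P2 * exp (- \<bar>y - Q2\<bar>))"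
    by (rule ext) (simp only: pk_u_def P1_def P2_def Q1_def Q2_def)
  have "deriv (pk_u c1 c2 t0 t) (ln Y) = P2 * exp (ln Y - Q2) - P1 * exp (Q1 - ln Y)"
    unfolding u using pk_ym_between_peaks[OF assms]
    by (intro DERIV_imp_deriv peakon_pair_has_real_derivative) (simp_all add: ym Q1_def Q2_def)
  also have "\<dots> = (c2 - c1 * E t) / (1 - E t) * (Y / exp Q2) - (c1 - c2 * E t) / (1 - E t) * (exp Q1 / Y)"
    using Y_pos by (simp add: P1_def P2_def pk_p1_def pk_p2_def exp_diff flip: E_def)
  also have "\<dots> = - (L^2 * E t * (M t x)^2 + (N t x)^2) / ((1 - E t) * M t x * N t x)"
    using L_pos M N E_less_1[OF assms(1)] weight1_pos[of t] weight2_pos[of t] w_pos[of t]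
    unfolding Q1_def Q2_def exp_pk_q1 exp_pk_q2 Y_def
    by (simp add: divide_simps) (simp add: algebra_simps power2_eq_square)
  finally show ?thesis
    by (simp add: ym)
qed

lemma pulled_back_energy_eq:
  assumes "t < t0" and "z1 < exp x" and "exp x < z2"
  shows "(deriv (pk_u c1 c2 t0 t) (pk_ym c1 c2 t0 t x))^2 * deriv (pk_ym c1 c2 t0 t) x
         = - c1 * c2 * w t * (L^2 * E t * (M t x)^2 + (N t x)^2)^2
           * (- L * c1 * c2 * (1 - E 0)^2 * exp x) / ((M t x)^3 * (N t x)^3)"
proof -
  \<comment> \<open>the blow-up \<open>(1 - E t)\<^sup>-\<^sup>2\<close> of \<open>u\<^sub>x\<^sup>2\<close> is cancelled by the compression of the characteristics\<close>
  have cancel: "(- S / (f * m * n))^2 * (k * f^2 * v * q / (m * n))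
                = k * v * S^2 * q / (m^3 * n^3)" if "f \<noteq> 0" "m \<noteq> 0" "n \<noteq> 0" for S f m n k v q :: real
    using that by (simp add: field_simps power2_eq_square power3_eq_cube)
  have "M t x \<noteq> 0" and "N t x \<noteq> 0" and "1 - E t \<noteq> 0"
    using assms M_neg N_neg E_less_1 by (auto simp: less_imp_neq)
  then show ?thesis
    unfolding deriv_pk_u_at_pk_ym[OF assms] DERIV_imp_deriv[OF pk_ym_has_real_derivative[OF assms(2,3)]]
    by (intro cancel)
qed

lemma E_tendsto: "(E \<longlongrightarrow> 1) (at_left t0)" and w_tendsto: "(w \<longlongrightarrow> 1) (at_left t0)"
  unfolding E_def w_def by (auto intro!: tendsto_eq_intros)

lemma M_tendsto: "((\<lambda>t. M t x) \<longlongrightarrow> L * pk_hstar_den c1 c2 t0 x) (at_left t0)"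
proof -
  have "((\<lambda>t. M t x) \<longlongrightarrow> pk_D c1 c2 t0 x + 1 * (c1 - c2 * 1) * pk_C c1 c2 t0 x) (at_left t0)"
    unfolding M_def by (intro tendsto_intros E_tendsto w_tendsto)
  then show ?thesis
    by (simp add: pk_D_plus_L_pk_C)
qed

lemma N_tendsto: "((\<lambda>t. N t x) \<longlongrightarrow> L^2 * pk_hstar_den c1 c2 t0 x) (at_left t0)"
proof -
  have "((\<lambda>t. N t x) \<longlongrightarrow> (c1 * 1 - c2) * pk_D c1 c2 t0 x + L^2 * 1 * 1 * pk_C c1 c2 t0 x) (at_left t0)"
    unfolding N_def by (intro tendsto_intros E_tendsto w_tendsto)
  moreover have "(c1 * 1 - c2) * pk_D c1 c2 t0 x + L^2 * 1 * 1 * pk_C c1 c2 t0 x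
                 = L * (pk_D c1 c2 t0 x + L * pk_C c1 c2 t0 x)"
    by (simp add: algebra_simps power2_eq_square)
  ultimately show ?thesis
    by (simp add: pk_D_plus_L_pk_C power2_eq_square mult.assoc)
qed

lemma pk_hstar_den_neg: "z1 < exp x \<Longrightarrow> exp x < z2 \<Longrightarrow> pk_hstar_den c1 c2 t0 x < 0"
  using pk_C_neg pk_D_neg L_pos by (simp add: pk_hstar_den_eq divide_neg_pos add_neg_neg mult_pos_neg)

lemma pulled_back_energy_tendsto:
  assumes "z1 < exp x" and "exp x < z2"
  shows "((\<lambda>t. (deriv (pk_u c1 c2 t0 t) (pk_ym c1 c2 t0 t x))^2 * deriv (pk_ym c1 c2 t0 t) x)
           \<longlongrightarrow> pk_hstar c1 c2 t0 x) (at_left t0)"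
proof -
  define d where "d = pk_hstar_den c1 c2 t0 x"
  have "d \<noteq> 0"
    using pk_hstar_den_neg[OF assms] by (simp add: d_def)
  have "((\<lambda>t. - c1 * c2 * w t * (L^2 * E t * (M t x)^2 + (N t x)^2)^2
              * (- L * c1 * c2 * (1 - E 0)^2 * exp x) / ((M t x)^3 * (N t x)^3))
         \<longlongrightarrow> - c1 * c2 * 1 * (L^2 * 1 * (L * d)^2 + (L^2 * d)^2)^2
              * (- L * c1 * c2 * (1 - E 0)^2 * exp x) / ((L * d)^3 * (L^2 * d)^3)) (at_left t0)"
    unfolding d_def using L_pos \<open>d \<noteq> 0\<close>
    by (intro tendsto_intros E_tendsto w_tendsto M_tendsto N_tendsto) (simp add: d_def)
  also have "- c1 * c2 * 1 * (L^2 * 1 * (L * d)^2 + (L^2 * d)^2)^2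
              * (- L * c1 * c2 * (1 - E 0)^2 * exp x) / ((L * d)^3 * (L^2 * d)^3) = pk_hstar c1 c2 t0 x"
  proof -
    have key: "- c1 * c2 * 1 * (l^2 * 1 * (l * d)^2 + (l^2 * d)^2)^2 * (- l * c1 * c2 * P * X)
            / ((l * d)^3 * (l^2 * d)^3) = 4 * c1^2 * c2^2 * P * X / d^2" if "l \<noteq> 0" for l P X
      using that \<open>d \<noteq> 0\<close> by (simp add: field_simps power2_eq_square power3_eq_cube)
    show ?thesis
      unfolding pk_hstar_eq d_def[symmetric] using L_pos by (intro key) simp
  qed
  finally show ?thesis
  proof (rule Lim_transform_eventually)
    show "\<forall>\<^sub>F t in at_left t0. - c1 * c2 * w t * (L^2 * E t * (M t x)^2 + (N t x)^2)^2
              * (- L * c1 * c2 * (1 - E 0)^2 * exp x) / ((M t x)^3 * (N t x)^3)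
          = (deriv (pk_u c1 c2 t0 t) (pk_ym c1 c2 t0 t x))^2 * deriv (pk_ym c1 c2 t0 t) x"
      using pulled_back_energy_eq[OF _ assms] by (auto simp: eventually_at_filter)
  qed
qed

end

theorem mainTheorem6:
  fixes c1 c2 t0 :: real
  assumes "c1 > 0" and "c2 < 0" and "t0 > 0"
  shows "((\<forall>\<xi>\<in>{pk_q1 c1 c2 t0 0 .. pk_q2 c1 c2 t0 0}. pk_hstar_den c1 c2 t0 \<xi> \<noteq> 0) \<longrightarrow>
            (pk_hstar c1 c2 t0 has_integral (- 4 * c1 * c2)) {pk_q1 c1 c2 t0 0 .. pk_q2 c1 c2 t0 0})
         \<and> (\<forall>\<xi>\<in>{pk_q1 c1 c2 t0 0 <..< pk_q2 c1 c2 t0 0}.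
              ((\<lambda>t. (deriv (pk_u c1 c2 t0 t) (pk_ym c1 c2 t0 t \<xi>))^2 * deriv (pk_ym c1 c2 t0 t) \<xi>)
                 \<longlongrightarrow> pk_hstar c1 c2 t0 \<xi>) (at_left t0))"
proof -
  interpret two_peakon c1 c2 t0
    using assms by unfold_locales
  show ?thesis
  proof (intro conjI impI ballI)
    show "(pk_hstar c1 c2 t0 has_integral (- 4 * c1 * c2)) {pk_q1 c1 c2 t0 0 .. pk_q2 c1 c2 t0 0}"
      if "\<forall>\<xi>\<in>{pk_q1 c1 c2 t0 0 .. pk_q2 c1 c2 t0 0}. pk_hstar_den c1 c2 t0 \<xi> \<noteq> 0"
      using that by (rule pk_hstar_has_integral)
  next
    fix \<xi> assume "\<xi> \<in> {pk_q1 c1 c2 t0 0 <..< pk_q2 c1 c2 t0 0}"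
    then have "z1 < exp \<xi>" and "exp \<xi> < z2"
      by (simp_all add: z1_def z2_def)
    then show "((\<lambda>t. (deriv (pk_u c1 c2 t0 t) (pk_ym c1 c2 t0 t \<xi>))^2 * deriv (pk_ym c1 c2 t0 t) \<xi>)
                 \<longlongrightarrow> pk_hstar c1 c2 t0 \<xi>) (at_left t0)"
      by (rule pulled_back_energy_tendsto)
  qed
qed

end
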